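(* Let $f: S^1 \rightarrow S^1$ be a Morse-Smale diffeomorphism. Then the topological entropy of the induced continuum map $C(f): C(S^1)\to C(S^1)$ is zero.
   Context: A $C^r$ diffeomorphism ($r\ge1$) is Morse-Smale if its nonwandering set consists of finitely many periodic points, all hyperbolic, with mutually transversal stable and unstable manifolds. $C(S^1)$ is the hyperspace of nonempty compact connected subsets of $S^1$ with the Hausdorff metric and $C(f)(A)=f(A)$. *)

theory Defs
  imports "HOL-Analysis.Analysis"
begin

definition S1 :: "complex set" where
  "S1 = sphere 0 1"

text \<open>A map of the circle (given as a map on complex numbers, of which only the
restriction to S1 matters) is C^1 if it maps S1 into S1 and its composition with
the standard parametrisation t \<mapsto> cis t is a C^1 curve in the plane.\<close>
definition C1_circle_map :: "(complex \<Rightarrow> complex) \<Rightarrow> bool" where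
  "C1_circle_map h \<longleftrightarrow> h ` S1 \<subseteq> S1 \<and>
     (\<exists>h'. continuous_on UNIV h' \<and>
        (\<forall>t. ((\<lambda>s. h (cis s)) has_vector_derivative h' t) (at t)))"

definition C1_circle_diffeo :: "(complex \<Rightarrow> complex) \<Rightarrow> bool" where
  "C1_circle_diffeo f \<longleftrightarrow> bij_betw f S1 S1 \<and> C1_circle_map f \<and>
     C1_circle_map (inv_into S1 f)"

definition periodic_points :: "(complex \<Rightarrow> complex) \<Rightarrow> complex set" where
  "periodic_points f = {x \<in> S1. \<exists>n>0. (f ^^ n) x = x}"

text \<open>A periodic point p is hyperbolic if for its periods n the derivative of
f^n at p (the linear map T_p S1 \<rightarrow> T_p S1) has absolute value \<noteq> 1. In the
parametrisation by cis, the absolute value of this multiplier is the speed of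
the curve s \<mapsto> f^n(cis s) at a parameter t with cis t = p.\<close>
definition hyperbolic_periodic_point :: "(complex \<Rightarrow> complex) \<Rightarrow> complex \<Rightarrow> bool" where
  "hyperbolic_periodic_point f p \<longleftrightarrow> p \<in> periodic_points f \<and>
     (\<forall>n>0. (f ^^ n) p = p \<longrightarrow>
        (\<forall>t D. cis t = p \<longrightarrow>
           ((\<lambda>s. (f ^^ n) (cis s)) has_vector_derivative D) (at t) \<longrightarrow> norm D \<noteq> 1))"

definition nonwandering_set :: "(complex \<Rightarrow> complex) \<Rightarrow> complex set" where
  "nonwandering_set f = {x \<in> S1. \<forall>U. openin (top_of_set S1) U \<and> x \<in> U \<longrightarrow>
       (\<exists>n>0. (f ^^ n) ` U \<inter> U \<noteq> {})}"

definition stable_set :: "(complex \<Rightarrow> complex) \<Rightarrow> complex \<Rightarrow> complex set" where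
  "stable_set f p = {x \<in> S1. (\<lambda>k. dist ((f ^^ k) x) ((f ^^ k) p)) \<longlonglongrightarrow> 0}"

definition unstable_set :: "(complex \<Rightarrow> complex) \<Rightarrow> complex \<Rightarrow> complex set" where
  "unstable_set f p = stable_set (inv_into S1 f) p"

text \<open>Transversality of W^s(p) and W^u(q) in the one-dimensional manifold S1:
at every intersection point x the tangent spaces span T_x S1. The invariant
manifolds of a hyperbolic periodic point of a circle diffeomorphism are either
a single point (tangent space 0) or an open subset of S1 (tangent space T_x S1),
so the condition says that x is a relative interior point of one of them.\<close>
definition transversal :: "complex set \<Rightarrow> complex set \<Rightarrow> bool" where
  "transversal W V \<longleftrightarrow> (\<forall>x \<in> W \<inter> V.
      (\<exists>U. openin (top_of_set S1) U \<and> x \<in> U \<and> U \<subseteq> W) \<or>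
      (\<exists>U. openin (top_of_set S1) U \<and> x \<in> U \<and> U \<subseteq> V))"

definition morse_smale_circle :: "(complex \<Rightarrow> complex) \<Rightarrow> bool" where
  "morse_smale_circle f \<longleftrightarrow> C1_circle_diffeo f \<and>
     nonwandering_set f = periodic_points f \<and>
     finite (periodic_points f) \<and>
     (\<forall>p \<in> periodic_points f. hyperbolic_periodic_point f p) \<and>
     (\<forall>p \<in> periodic_points f. \<forall>q \<in> periodic_points f.
        transversal (stable_set f p) (unstable_set f q))"

definition hausdorff_dist :: "'a::metric_space set \<Rightarrow> 'a set \<Rightarrow> real" where
  "hausdorff_dist A B = max (SUP a\<in>A. infdist a B) (SUP b\<in>B. infdist b A)"

definition continua_S1 :: "complex set set" where
  "continua_S1 = {A. A \<noteq> {} \<and> A \<subseteq> S1 \<and> compact A \<and> connected A}"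

definition separated_set ::
  "('b \<Rightarrow> 'b \<Rightarrow> real) \<Rightarrow> ('b \<Rightarrow> 'b) \<Rightarrow> 'b set \<Rightarrow> nat \<Rightarrow> real \<Rightarrow> 'b set \<Rightarrow> bool" where
  "separated_set d T X n \<epsilon> E \<longleftrightarrow> E \<subseteq> X \<and>
     (\<forall>x\<in>E. \<forall>y\<in>E. x \<noteq> y \<longrightarrow> (\<exists>k<n. d ((T ^^ k) x) ((T ^^ k) y) > \<epsilon>))"

definition topological_entropy ::
  "('b \<Rightarrow> 'b \<Rightarrow> real) \<Rightarrow> ('b \<Rightarrow> 'b) \<Rightarrow> 'b set \<Rightarrow> ereal" where
  "topological_entropy d T X =
     (SUP \<epsilon>\<in>{0<..}. limsup (\<lambda>n.
        SUP E\<in>{E. finite E \<and> separated_set d T X n \<epsilon> E}. ereal (ln (real (card E)) / real n)))"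

end

theory Submission
  imports Defs "HOL-Real_Asymp.Real_Asymp"
begin

text \<open>Cut the circle at the finite set P of points whose orbit of length n meets the m-th roots
of unity; P has at most m n points. Each iterate f^k with k < n maps every connected subset of
S1 - P into an arc between consecutive roots of unity, of diameter at most 2 pi / m. A continuum A
is an arc, so up to 2 pi / m in the Hausdorff metric along the first n iterates it is determined
by A \<inter> P together with the set of points of P lying below A in a fixed angular coordinate.
These data take polynomially many values in n, hence (n, \<epsilon>)-separated sets of continua
have polynomial size and the entropy vanishes.\<close>

section \<open>Angular coordinates on the circle\<close>

lemma mem_S1_iff: "x \<in> S1 \<longleftrightarrow> norm x = 1"
  by (simp add: S1_def)

lemma one_in_S1: "1 \<in> S1"
  by (simp add: mem_S1_iff)

lemma cis_Arg_of_norm_1: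
  assumes "norm w = 1" shows "cis (Arg w) = w"
proof -
  have "w \<noteq> 0" using assms by auto
  then show ?thesis using assms by (simp add: cis_Arg sgn_div_norm)
qed

lemma S1_eq_cis_image: "S1 = cis ` {-pi..pi}"
proof
  show "S1 \<subseteq> cis ` {-pi..pi}"
  proof
    fix x assume "x \<in> S1"
    then have "x = cis (Arg x)" by (simp add: cis_Arg_of_norm_1 mem_S1_iff)
    then show "x \<in> cis ` {-pi..pi}" using Arg_bounded[of x] by (intro image_eqI) auto
  qed
qed (auto simp: S1_def)

lemma continuous_on_S1_if_continuous_cis:
  assumes "continuous_on UNIV (\<lambda>s. h (cis s))"
  shows "continuous_on S1 h"
proof -
  have "closed (S1 \<inter> h -` U)" if "closed U" for U
  proof -
    have "compact ({-pi..pi} \<inter> (\<lambda>s. h (cis s)) -` U)"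
      using assms that by (intro compact_Int_closed continuous_closed_vimage)
        (auto simp: continuous_on_eq_continuous_at)
    then have "compact (cis ` ({-pi..pi} \<inter> (\<lambda>s. h (cis s)) -` U))"
      by (rule compact_continuous_image[rotated]) (intro continuous_intros)
    moreover have "cis ` ({-pi..pi} \<inter> (\<lambda>s. h (cis s)) -` U) = S1 \<inter> h -` U"
      unfolding S1_eq_cis_image by auto
    ultimately show ?thesis by (simp add: compact_imp_closed)
  qed
  then show ?thesis by (simp add: continuous_on_closed_vimage S1_def Int_commute)
qed

lemma uncountable_S1: "uncountable S1"
  by (rule connected_uncountable[of _ 1 "-1"]) (auto simp: S1_def connected_sphere)

text \<open>arc_coord z is the angle seen from the antipode of z: a homeomorphism of S1 - {z} onto
the open interval from -pi to pi, with inverse arc_point z; at z itself it takes the value pi.\<close>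

definition arc_coord :: "complex \<Rightarrow> complex \<Rightarrow> real" where
  "arc_coord z x = Arg (- x / z)"

definition arc_point :: "complex \<Rightarrow> real \<Rightarrow> complex" where
  "arc_point z t = - z * cis t"

lemma arc_point_in_S1: "z \<in> S1 \<Longrightarrow> arc_point z t \<in> S1"
  by (simp add: arc_point_def mem_S1_iff norm_mult)

lemma arc_point_arc_coord: "z \<in> S1 \<Longrightarrow> x \<in> S1 \<Longrightarrow> arc_point z (arc_coord z x) = x"
  unfolding arc_point_def arc_coord_def mem_S1_iff
  by (subst cis_Arg_of_norm_1) (auto simp: norm_divide)

lemma arc_coord_arc_point:
  assumes "z \<in> S1" "- pi < t" "t < pi" shows "arc_coord z (arc_point z t) = t"
  using assms Arg_cis[of t] by (auto simp: arc_coord_def arc_point_def mem_S1_iff)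

lemma inj_on_arc_coord: "z \<in> S1 \<Longrightarrow> inj_on (arc_coord z) S1"
  by (metis inj_onI arc_point_arc_coord)

lemma arc_coord_self: "z \<in> S1 \<Longrightarrow> arc_coord z z = pi"
  by (auto simp: arc_coord_def mem_S1_iff Arg_eq_pi_iff)

lemma arc_coord_bounded: "- pi < arc_coord z x" "arc_coord z x \<le> pi"
  using Arg_bounded by (simp_all add: arc_coord_def)

lemma nonpos_real_of_norm_1: "norm (w::complex) = 1 \<Longrightarrow> w \<in> \<real>\<^sub>\<le>\<^sub>0 \<Longrightarrow> w = -1"
  by (auto elim!: nonpos_Reals_cases)

lemma minus_divide_notin_nonpos_Reals:
  assumes "z \<in> S1" "x \<in> S1" "x \<noteq> z" shows "- x / z \<notin> \<real>\<^sub>\<le>\<^sub>0"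
proof
  assume "- x / z \<in> \<real>\<^sub>\<le>\<^sub>0"
  moreover have "norm (- x / z) = 1" using assms by (simp add: mem_S1_iff norm_divide)
  ultimately have "- x / z = -1" by (rule nonpos_real_of_norm_1[rotated])
  then show False using assms by (auto simp: mem_S1_iff field_simps)
qed

lemma arc_coord_less_pi:
  assumes "z \<in> S1" "x \<in> S1" "x \<noteq> z" shows "arc_coord z x < pi"
proof -
  have "Arg (- x / z) \<noteq> pi"
    using minus_divide_notin_nonpos_Reals[OF assms]
    by (auto simp: Arg_eq_pi_iff complex_nonpos_Reals_iff complex_is_Real_iff)
  then show ?thesis
    using Arg_bounded[of "- x / z"] by (auto simp: arc_coord_def)
qed

lemma continuous_on_arc_coord:
  assumes "z \<in> S1" shows "continuous_on (S1 - {z}) (arc_coord z)"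
  unfolding arc_coord_def
proof (intro continuous_intros)
  fix x assume "x \<in> S1 - {z}"
  then show "- x / z \<notin> \<real>\<^sub>\<le>\<^sub>0"
    using assms by (intro minus_divide_notin_nonpos_Reals) auto
qed (use assms in \<open>auto simp: mem_S1_iff\<close>)

lemma norm_cis_diff_le: "norm (cis s - cis t) \<le> \<bar>s - t\<bar>"
proof -
  have "cis s - cis t = cis t * (cis (s - t) - 1)"
    by (simp add: right_diff_distrib cis_mult)
  then have "norm (cis s - cis t) = norm (exp (\<i> * of_real (s - t)) - 1)"
    by (simp add: norm_mult cis_conv_exp)
  also have "\<dots> = 2 * \<bar>sin ((s - t) / 2)\<bar>" by (rule dist_exp_i_1)
  also have "\<dots> \<le> \<bar>s - t\<bar>" using abs_sin_x_le_abs_x[of "(s - t) / 2"] by simp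
  finally show ?thesis .
qed

lemma dist_arc_point_le: "z \<in> S1 \<Longrightarrow> dist (arc_point z s) (arc_point z t) \<le> \<bar>s - t\<bar>"
  using norm_cis_diff_le[of s t]
  by (simp add: arc_point_def dist_norm mem_S1_iff norm_mult norm_minus_commute
      flip: right_diff_distrib)

lemma continuous_arc_point: "continuous_on UNIV (arc_point z)"
  unfolding arc_point_def by (intro continuous_intros)

lemma mem_connected_if_arc_coord_between:
  assumes "z \<in> S1" "A \<subseteq> S1 - {z}" "connected A" "a \<in> A" "a' \<in> A" "x \<in> S1"
    and "arc_coord z a \<le> arc_coord z x" "arc_coord z x \<le> arc_coord z a'"
  shows "x \<in> A"
proof -
  have "connected (arc_coord z ` A)"
    using assms
    by (intro connected_continuous_image continuous_on_subset[OF continuous_on_arc_coord])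
  then have "arc_coord z x \<in> arc_coord z ` A"
    using assms connectedD_interval[of "arc_coord z ` A" "arc_coord z a" "arc_coord z a'"] by blast
  then show ?thesis
    using assms inj_on_arc_coord[of z] by (auto dest: inj_onD)
qed

definition roots_of_unity :: "nat \<Rightarrow> complex set" where
  "roots_of_unity m = (\<lambda>j. cis (2 * pi * real j / real m)) ` {..<m}"

lemma finite_roots_of_unity: "finite (roots_of_unity m)"
  by (simp add: roots_of_unity_def)

lemma card_roots_of_unity_le: "card (roots_of_unity m) \<le> m"
  unfolding roots_of_unity_def using card_image_le[of "{..<m}"] by simp

lemma one_in_roots_of_unity: "m > 0 \<Longrightarrow> 1 \<in> roots_of_unity m"
  unfolding roots_of_unity_def by (rule image_eqI[of _ _ 0]) auto

lemma roots_of_unity_between: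
  assumes "m > 0" "- pi < s" "t < pi" "t - s > 2 * pi / m"
  obtains c where "s < c" "c < t" "arc_point 1 c \<in> roots_of_unity m"
proof -
  define u where "u = (s + pi) * m / (2 * pi)"
  define j where "j = nat \<lfloor>u\<rfloor> + 1"
  define c where "c = 2 * pi * j / m - pi"
  have "real j = of_int \<lfloor>u\<rfloor> + 1"
    using assms(2) by (simp add: j_def u_def)
  then have "u < j" "j \<le> u + 1"
    using of_int_floor_le[of u] real_of_int_floor_add_one_gt[of u] by linarith+
  then have "s + pi < 2 * pi * j / m" "2 * pi * j / m \<le> s + pi + 2 * pi / m"
    using assms(1) by (simp_all add: u_def field_simps)
  then have "s < c" "c \<le> s + 2 * pi / m"
    by (simp_all add: c_def)
  then have "c < t" using assms(4) by linarith
  then have "2 * pi * j / m < 2 * pi" using assms(3) by (simp add: c_def)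
  then have "j < m" using assms(1) by (simp add: divide_less_eq)
  have "arc_point 1 c = cis (2 * pi * j / m)"
    by (simp add: arc_point_def c_def minus_cis)
  then have "arc_point 1 c \<in> roots_of_unity m"
    using \<open>j < m\<close> unfolding roots_of_unity_def by auto
  then show ?thesis using that \<open>s < c\<close> \<open>c < t\<close> by blast
qed

lemma dist_le_if_connected_avoiding_roots_of_unity:
  assumes "m > 0" "connected C" "C \<subseteq> S1 - roots_of_unity m" "x \<in> C" "y \<in> C"
  shows "dist x y \<le> 2 * pi / m"
proof -
  have C: "C \<subseteq> S1 - {1}" using assms one_in_roots_of_unity by auto
  have gap: "\<bar>arc_coord 1 y - arc_coord 1 x\<bar> \<le> 2 * pi / m" if "x \<in> C" "y \<in> C" 
    "arc_coord 1 x \<le> arc_coord 1 y" for x y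
  proof (rule ccontr)
    assume "\<not> ?thesis"
    then have far: "arc_coord 1 y - arc_coord 1 x > 2 * pi / m" using that(3) by linarith
    have "- pi < arc_coord 1 x" "arc_coord 1 y < pi"
      using arc_coord_bounded(1) arc_coord_less_pi[OF one_in_S1, of y] C that by auto
    then obtain c
      where c: "arc_coord 1 x < c" "c < arc_coord 1 y" "arc_point 1 c \<in> roots_of_unity m"
      using roots_of_unity_between[OF assms(1) _ _ far] by blast
    then have "arc_coord 1 (arc_point 1 c) = c"
      using \<open>- pi < arc_coord 1 x\<close> \<open>arc_coord 1 y < pi\<close>
      by (intro arc_coord_arc_point[OF one_in_S1]) linarith+
    then have "arc_coord 1 x \<le> arc_coord 1 (arc_point 1 c)"
      and "arc_coord 1 (arc_point 1 c) \<le> arc_coord 1 y"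
      using c by auto
    then have "arc_point 1 c \<in> C"
      by (rule mem_connected_if_arc_coord_between[OF one_in_S1 C assms(2) that(1,2)
            arc_point_in_S1[OF one_in_S1]])
    then show False using c assms(3) by auto
  qed
  have "x \<in> S1" "y \<in> S1" using C assms(4,5) by auto
  then have "dist x y = dist (arc_point 1 (arc_coord 1 x)) (arc_point 1 (arc_coord 1 y))"
    by (simp add: arc_point_arc_coord[OF one_in_S1])
  also have "\<dots> \<le> \<bar>arc_coord 1 x - arc_coord 1 y\<bar>" by (rule dist_arc_point_le[OF one_in_S1])
  also have "\<dots> \<le> 2 * pi / m"
    using gap[OF assms(4,5)] gap[OF assms(5,4)] by linarith
  finally show ?thesis .
qed

lemma finite_nearest_towards:
  fixes T :: "real set"
  assumes "finite T" "r \<in> T" "s \<noteq> r"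
  obtains p where "p \<in> T" "p \<in> closed_segment s r" "p \<noteq> s" "open_segment s p \<inter> T = {}"
proof (cases "s < r")
  case True
  define p where "p = Min (T \<inter> {s<..r})"
  have "p \<in> T \<inter> {s<..r}" unfolding p_def using assms True by (intro Min_in) auto
  moreover have "p \<le> x" if "x \<in> T \<inter> {s<..r}" for x
    unfolding p_def using assms that by (intro Min_le) auto
  ultimately show ?thesis
    using that[of p] True by (fastforce simp: closed_segment_eq_real_ivl open_segment_eq_real_ivl)
next
  case False
  define p where "p = Max (T \<inter> {r..<s})"
  have "p \<in> T \<inter> {r..<s}" unfolding p_def using assms False by (intro Max_in) auto
  moreover have "x \<le> p" if "x \<in> T \<inter> {r..<s}" for x
    unfolding p_def using assms that by (intro Max_ge) auto
  ultimately show ?thesis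
    using that[of p] False by (fastforce simp: closed_segment_eq_real_ivl open_segment_eq_real_ivl)
qed

section \<open>Cutting the circle at finitely many points\<close>

text \<open>If 1 \<in> P, a continuum disjoint from P lies in a single gap of P; points_below tells
which one.\<close>

definition points_below :: "complex set \<Rightarrow> complex set \<Rightarrow> complex set" where
  "points_below P A = {x \<in> P. \<exists>a\<in>A. arc_coord 1 x < arc_coord 1 a}"

definition cut_signature :: "complex set \<Rightarrow> complex set \<Rightarrow> complex set \<times> complex set" where
  "cut_signature P A = (A \<inter> P, points_below P A)"

text \<open>A continuum meets P in all of P, in nothing, or, if it misses some z \<in> P, in a cut arc
for the coordinate arc_coord z.\<close>

definition cut_arc :: "complex set \<Rightarrow> complex \<Rightarrow> complex \<Rightarrow> complex \<Rightarrow> complex set" where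
  "cut_arc P z p q = {x \<in> P. arc_coord z p \<le> arc_coord z x \<and> arc_coord z x \<le> arc_coord z q}"

definition arc_traces :: "complex set \<Rightarrow> complex set set" where
  "arc_traces P = insert P (insert {} ((\<lambda>(z, p, q). cut_arc P z p q) ` (P \<times> P \<times> P)))"

definition initial_segments :: "complex set \<Rightarrow> complex set set" where
  "initial_segments P = insert {} ((\<lambda>q. {x \<in> P. arc_coord 1 x \<le> arc_coord 1 q}) ` P)"

lemma card_insert_le_Suc: "finite X \<Longrightarrow> card (insert x X) \<le> Suc (card X)"
  by (simp add: card_insert_if)

lemma card_arc_traces_le:
  assumes "finite P" shows "card (arc_traces P) \<le> card P ^ 3 + 2"
proof -
  let ?I = "(\<lambda>(z, p, q). cut_arc P z p q) ` (P \<times> P \<times> P)"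
  have "card ?I \<le> card (P \<times> P \<times> P)"
    using assms by (intro card_image_le) simp
  also have "\<dots> = card P ^ 3"
    by (simp add: card_cartesian_product power3_eq_cube)
  finally show ?thesis
    using assms card_insert_le_Suc[of ?I "{}"] card_insert_le_Suc[of "insert {} ?I" P]
    unfolding arc_traces_def by simp
qed

lemma card_initial_segments_le:
  assumes "finite P" shows "card (initial_segments P) \<le> card P + 1"
  using assms card_insert_le_Suc[of "(\<lambda>q. {x \<in> P. arc_coord 1 x \<le> arc_coord 1 q}) ` P" "{}"]
    card_image_le[of P "\<lambda>q. {x \<in> P. arc_coord 1 x \<le> arc_coord 1 q}"]
  unfolding initial_segments_def by simp

lemma continuum_Int_in_arc_traces:
  assumes P: "finite P" "P \<subseteq> S1" and A: "A \<in> continua_S1"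
  shows "A \<inter> P \<in> arc_traces P"
proof (cases "A \<inter> P = P \<or> A \<inter> P = {}")
  case True
  then show ?thesis by (auto simp: arc_traces_def)
next
  case False
  then obtain z where z: "z \<in> P" "z \<notin> A" and ne: "A \<inter> P \<noteq> {}" by auto
  have A_sub: "A \<subseteq> S1 - {z}" and "connected A" using A z by (auto simp: continua_S1_def)
  let ?C = "arc_coord z ` (A \<inter> P)"
  have fin: "finite ?C" and "?C \<noteq> {}" using P ne by simp_all
  then have "Min ?C \<in> ?C" "Max ?C \<in> ?C" by simp_all
  then obtain p q
    where pq: "Min ?C = arc_coord z p" "p \<in> A \<inter> P" "Max ?C = arc_coord z q" "q \<in> A \<inter> P"
    by (elim imageE)
  have "A \<inter> P = cut_arc P z p q"
  proof (intro equalityI subsetI)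
    fix x assume x: "x \<in> A \<inter> P"
    then have "Min ?C \<le> arc_coord z x" "arc_coord z x \<le> Max ?C" using fin by simp_all
    then show "x \<in> cut_arc P z p q" using x pq by (simp add: cut_arc_def)
  next
    fix x assume x: "x \<in> cut_arc P z p q"
    have "x \<in> A"
      by (rule mem_connected_if_arc_coord_between[OF _ A_sub \<open>connected A\<close>, of p q])
        (use P pq x z in \<open>auto simp: cut_arc_def\<close>)
    then show "x \<in> A \<inter> P" using x by (simp add: cut_arc_def)
  qed
  moreover have "cut_arc P z p q \<in> (\<lambda>(z, p, q). cut_arc P z p q) ` (P \<times> P \<times> P)"
    using z pq by (intro image_eqI[of _ _ "(z, p, q)"]) auto
  ultimately show ?thesis
    unfolding arc_traces_def by simp
qed

lemma points_below_in_initial_segments: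
  assumes "finite P" shows "points_below P A \<in> initial_segments P"
proof (cases "points_below P A = {}")
  case True
  then show ?thesis by (simp add: initial_segments_def)
next
  case False
  let ?C = "arc_coord 1 ` points_below P A"
  have fin: "finite ?C" using assms by (simp add: points_below_def)
  have "Max ?C \<in> ?C" using fin False by simp
  then obtain q where q: "q \<in> points_below P A" "Max ?C = arc_coord 1 q"
    by (elim imageE) simp
  have "points_below P A = {x \<in> P. arc_coord 1 x \<le> arc_coord 1 q}"
  proof (intro equalityI subsetI)
    fix x assume x: "x \<in> points_below P A"
    then have "arc_coord 1 x \<le> Max ?C" using fin by simp
    then show "x \<in> {x \<in> P. arc_coord 1 x \<le> arc_coord 1 q}"
      using q x by (simp add: points_below_def)
  next
    fix x assume "x \<in> {x \<in> P. arc_coord 1 x \<le> arc_coord 1 q}"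
    then show "x \<in> points_below P A"
      using q(1) by (force simp: points_below_def)
  qed
  then show ?thesis
    unfolding initial_segments_def using q(1) by (auto simp: points_below_def)
qed

lemma cut_signatures_subset:
  assumes "finite P" "P \<subseteq> S1"
  shows "cut_signature P ` continua_S1 \<subseteq> arc_traces P \<times> initial_segments P"
  using assms continuum_Int_in_arc_traces points_below_in_initial_segments
  by (auto simp: cut_signature_def)

lemma finite_arc_traces_initial_segments:
  "finite P \<Longrightarrow> finite (arc_traces P \<times> initial_segments P)"
  by (simp add: arc_traces_def initial_segments_def)

lemma finite_cut_signatures:
  "finite P \<Longrightarrow> P \<subseteq> S1 \<Longrightarrow> finite (cut_signature P ` continua_S1)"
  using cut_signatures_subset finite_arc_traces_initial_segments by (rule finite_subset)

lemma card_cut_signatures_le: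
  assumes "finite P" "P \<subseteq> S1"
  shows "card (cut_signature P ` continua_S1) \<le> (card P ^ 3 + 2) * (card P + 1)"
proof -
  have "card (cut_signature P ` continua_S1) \<le> card (arc_traces P \<times> initial_segments P)"
    using assms cut_signatures_subset finite_arc_traces_initial_segments by (intro card_mono)
  also have "\<dots> = card (arc_traces P) * card (initial_segments P)"
    by (rule card_cartesian_product)
  also have "\<dots> \<le> (card P ^ 3 + 2) * (card P + 1)"
    using assms by (intro mult_le_mono card_arc_traces_le card_initial_segments_le)
  finally show ?thesis .
qed

lemma hausdorff_dist_le:
  assumes "A \<noteq> {}" "B \<noteq> {}"
    and "\<And>a. a \<in> A \<Longrightarrow> \<exists>b\<in>B. dist a b \<le> c"
    and "\<And>b. b \<in> B \<Longrightarrow> \<exists>a\<in>A. dist b a \<le> c"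
  shows "hausdorff_dist A B \<le> c"
proof -
  have "infdist a B \<le> c" if "a \<in> A" for a
    using assms(3)[OF that] infdist_le order.trans by metis
  moreover have "infdist b A \<le> c" if "b \<in> B" for b
    using assms(4)[OF that] infdist_le order.trans by metis
  ultimately show ?thesis
    using assms(1,2) unfolding hausdorff_dist_def by (auto intro!: cSUP_least)
qed

locale circle_cut =
  fixes P :: "complex set" and g :: "complex \<Rightarrow> complex" and \<delta> :: real
  assumes finite_cut: "finite P" and cut_subset_S1: "P \<subseteq> S1" and one_in_cut: "1 \<in> P"
    and continuous_on_g: "continuous_on S1 g"
    and dist_le_on_gaps:
      "\<And>C x y. connected C \<Longrightarrow> C \<subseteq> S1 - P \<Longrightarrow> x \<in> C \<Longrightarrow> y \<in> C \<Longrightarrow> dist (g x) (g y) \<le> \<delta>"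
begin

lemma delta_nonneg: "0 \<le> \<delta>"
proof -
  have "\<not> S1 \<subseteq> P"
    using uncountable_S1 countable_subset[OF _ countable_finite[OF finite_cut]] by blast
  then obtain x where "x \<in> S1 - P" by blast
  then show ?thesis using dist_le_on_gaps[of "{x}" x x] by simp
qed

lemma dist_le_inside_gap:
  assumes z: "z \<in> S1" and st: "s \<in> {-pi..pi}" "t \<in> {-pi..pi}"
    and gap: "\<And>x. x \<in> P \<Longrightarrow> arc_coord z x \<notin> open_segment s t"
    and uv: "u \<in> open_segment s t" "v \<in> open_segment s t"
  shows "dist (g (arc_point z u)) (g (arc_point z v)) \<le> \<delta>"
proof -
  have "arc_point z ` open_segment s t \<subseteq> S1 - P"
  proof
    fix y assume "y \<in> arc_point z ` open_segment s t"
    then obtain w where w: "w \<in> open_segment s t" "y = arc_point z w" by blast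
    then have "- pi < w" "w < pi"
      using st by (auto simp: open_segment_eq_real_ivl split: if_splits)
    then have "arc_coord z y = w" using w z by (simp add: arc_coord_arc_point)
    then show "y \<in> S1 - P" using gap[of y] w z by (auto simp: arc_point_in_S1)
  qed
  moreover have "connected (arc_point z ` open_segment s t)"
    by (intro connected_continuous_image continuous_on_subset[OF continuous_arc_point])
      (simp_all add: convex_connected)
  ultimately show ?thesis
    using uv by (intro dist_le_on_gaps) auto
qed

text \<open>The endpoints of the gap may lie in P; the bound reaches them by continuity of g.\<close>

lemma dist_le_across_gap:
  assumes z: "z \<in> S1" and st: "s \<in> {-pi..pi}" "t \<in> {-pi..pi}"
    and gap: "\<And>x. x \<in> P \<Longrightarrow> arc_coord z x \<notin> open_segment s t"
  shows "dist (g (arc_point z s)) (g (arc_point z t)) \<le> \<delta>"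
proof (cases "s = t")
  case True
  then show ?thesis using delta_nonneg by simp
next
  case False
  define I where "I = open_segment s t"
  define h where "h = (\<lambda>u. g (arc_point z u))"
  have h: "continuous_on UNIV h"
    unfolding h_def using z arc_point_in_S1
    by (intro continuous_on_compose2[OF continuous_on_g continuous_arc_point]) blast
  have "continuous_on UNIV (\<lambda>p. h (fst p))"
    by (rule continuous_on_compose2[OF h continuous_on_fst[OF continuous_on_id]]) simp
  moreover have "continuous_on UNIV (\<lambda>p. h (snd p))"
    by (rule continuous_on_compose2[OF h continuous_on_snd[OF continuous_on_id]]) simp
  ultimately have "continuous_on (closure (I \<times> I)) (\<lambda>p. dist (h (fst p)) (h (snd p)))"
    by (intro continuous_on_dist) (auto elim: continuous_on_subset)
  moreover have "(s, t) \<in> closure (I \<times> I)"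
    using False by (simp add: I_def closure_Times)
  moreover have "dist (h (fst p)) (h (snd p)) \<le> \<delta>" if "p \<in> I \<times> I" for p
    using that dist_le_inside_gap[OF z st gap] by (auto simp: I_def h_def)
  ultimately show ?thesis
    using continuous_le_on_closure[of "I \<times> I" "\<lambda>p. dist (h (fst p)) (h (snd p))" "(s, t)" \<delta>]
    by (simp add: h_def)
qed

lemma points_below_disjoint_continuum:
  assumes A: "A \<in> continua_S1" "A \<inter> P = {}" and a: "a \<in> A"
  shows "points_below P A = {x \<in> P. arc_coord 1 x < arc_coord 1 a}"
proof (intro equalityI subsetI)
  fix x assume x: "x \<in> points_below P A"
  then obtain a' where a': "a' \<in> A" "arc_coord 1 x < arc_coord 1 a'" and "x \<in> P"
    by (auto simp: points_below_def)
  have A_sub: "A \<subseteq> S1 - {1}" and "connected A"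
    using A one_in_cut by (auto simp: continua_S1_def)
  show "x \<in> {x \<in> P. arc_coord 1 x < arc_coord 1 a}"
  proof (rule ccontr)
    assume "x \<notin> {x \<in> P. arc_coord 1 x < arc_coord 1 a}"
    then have "arc_coord 1 a \<le> arc_coord 1 x" using \<open>x \<in> P\<close> by auto
    moreover have "x \<in> S1" using \<open>x \<in> P\<close> cut_subset_S1 by auto
    ultimately have "x \<in> A"
      using mem_connected_if_arc_coord_between[OF one_in_S1 A_sub \<open>connected A\<close> a a'(1)] a'(2)
      by simp
    then show False using A(2) \<open>x \<in> P\<close> by auto
  qed
qed (use a in \<open>auto simp: points_below_def\<close>)

lemma dist_le_nearest_cut_point:
  assumes z: "z \<in> S1" and a: "a \<in> S1" "a \<noteq> z" and q: "q \<in> P"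
    and ne: "arc_coord z a \<noteq> arc_coord z q"
  obtains p where "p \<in> P" "arc_coord z p \<in> closed_segment (arc_coord z a) (arc_coord z q)"
    "dist (g a) (g p) \<le> \<delta>"
proof -
  obtain p' where p': "p' \<in> arc_coord z ` P" "p' \<in> closed_segment (arc_coord z a) (arc_coord z q)"
      "open_segment (arc_coord z a) p' \<inter> arc_coord z ` P = {}"
    by (rule finite_nearest_towards[of "arc_coord z ` P" "arc_coord z q" "arc_coord z a"])
      (use finite_cut q ne in auto)
  from p'(1) obtain p where p: "p' = arc_coord z p" "p \<in> P" by (rule imageE)
  have "dist (g (arc_point z (arc_coord z a))) (g (arc_point z (arc_coord z p))) \<le> \<delta>"
  proof (rule dist_le_across_gap[OF z])
    show "arc_coord z a \<in> {-pi..pi}" "arc_coord z p \<in> {-pi..pi}"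
      using arc_coord_bounded[of z] by (auto simp: less_imp_le)
    show "arc_coord z x \<notin> open_segment (arc_coord z a) (arc_coord z p)" if "x \<in> P" for x
      using p'(3) that unfolding p(1) by blast
  qed
  moreover have "p \<in> S1" using p(2) cut_subset_S1 by auto
  ultimately have "dist (g a) (g p) \<le> \<delta>"
    by (simp add: arc_point_arc_coord[OF z] a)
  then show ?thesis using that[OF p(2)] p'(2) unfolding p(1) by blast
qed

lemma exists_close_point_if_disjoint_same_points_below:
  assumes A: "A \<in> continua_S1" "A \<inter> P = {}" and B: "B \<in> continua_S1" "B \<inter> P = {}"
    and below: "points_below P A = points_below P B" and a: "a \<in> A"
  shows "\<exists>b\<in>B. dist (g a) (g b) \<le> \<delta>"
proof -
  obtain b where b: "b \<in> B" using B by (auto simp: continua_S1_def)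
  have "a \<in> S1" "b \<in> S1" using A B a b by (auto simp: continua_S1_def)
  have same_below: "{x \<in> P. arc_coord 1 x < arc_coord 1 a} = {x \<in> P. arc_coord 1 x < arc_coord 1 b}"
    using points_below_disjoint_continuum[OF A a] points_below_disjoint_continuum[OF B b] below
    by simp
  have "arc_coord 1 x \<notin> open_segment (arc_coord 1 a) (arc_coord 1 b)" if "x \<in> P" for x
  proof
    assume "arc_coord 1 x \<in> open_segment (arc_coord 1 a) (arc_coord 1 b)"
    then have "arc_coord 1 x < arc_coord 1 a \<longleftrightarrow> \<not> arc_coord 1 x < arc_coord 1 b"
      by (auto simp: open_segment_eq_real_ivl split: if_splits)
    moreover have "arc_coord 1 x < arc_coord 1 a \<longleftrightarrow> arc_coord 1 x < arc_coord 1 b"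
      using same_below that by blast
    ultimately show False by simp
  qed
  then have "dist (g (arc_point 1 (arc_coord 1 a))) (g (arc_point 1 (arc_coord 1 b))) \<le> \<delta>"
    using arc_coord_bounded by (intro dist_le_across_gap[OF one_in_S1]) (auto simp: less_imp_le)
  then show ?thesis
    using b \<open>a \<in> S1\<close> \<open>b \<in> S1\<close> by (auto simp: arc_point_arc_coord[OF one_in_S1])
qed

lemma exists_close_cut_point_in_continuum:
  assumes A: "A \<in> continua_S1" and z: "z \<in> P" "z \<notin> A" and q: "q \<in> A \<inter> P"
    and a: "a \<in> A" "a \<notin> P"
  shows "\<exists>p\<in>A \<inter> P. dist (g a) (g p) \<le> \<delta>"
proof -
  have "z \<in> S1" "q \<in> S1" using z q cut_subset_S1 by auto
  have A_sub: "A \<subseteq> S1 - {z}" and "connected A" and "a \<in> S1"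
    using A z a by (auto simp: continua_S1_def)
  have "a \<noteq> z" "a \<noteq> q" using z q a by auto
  then have "arc_coord z a \<noteq> arc_coord z q"
    using inj_on_arc_coord[OF \<open>z \<in> S1\<close>] \<open>a \<in> S1\<close> \<open>q \<in> S1\<close> by (auto dest: inj_onD)
  then obtain p where p: "p \<in> P" "arc_coord z p \<in> closed_segment (arc_coord z a) (arc_coord z q)"
      "dist (g a) (g p) \<le> \<delta>"
    using dist_le_nearest_cut_point[OF \<open>z \<in> S1\<close> \<open>a \<in> S1\<close> \<open>a \<noteq> z\<close>] q by blast
  have "p \<in> S1" using p cut_subset_S1 by auto
  have "q \<in> A" using q by simp
  have "p \<in> A"
    using mem_connected_if_arc_coord_between[OF \<open>z \<in> S1\<close> A_sub \<open>connected A\<close> a(1) \<open>q \<in> A\<close> \<open>p \<in> S1\<close>]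
      mem_connected_if_arc_coord_between[OF \<open>z \<in> S1\<close> A_sub \<open>connected A\<close> \<open>q \<in> A\<close> a(1) \<open>p \<in> S1\<close>]
      p(2)
    by (cases "arc_coord z a \<le> arc_coord z q") (simp_all add: closed_segment_eq_real_ivl)
  then show ?thesis using p by auto
qed

lemma exists_close_point_if_same_cut_signature:
  assumes A: "A \<in> continua_S1" and B: "B \<in> continua_S1"
    and sig: "cut_signature P A = cut_signature P B" and a: "a \<in> A"
  shows "\<exists>b\<in>B. dist (g a) (g b) \<le> \<delta>"
proof -
  have AP: "A \<inter> P = B \<inter> P" and below: "points_below P A = points_below P B"
    using sig by (simp_all add: cut_signature_def)
  have "a \<in> S1" using A a by (auto simp: continua_S1_def)
  consider "a \<in> P" | "A \<inter> P = {}" | "a \<notin> P" "P \<subseteq> A"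
    | z q where "z \<in> P" "z \<notin> A" "q \<in> A \<inter> P" "a \<notin> P"
    by blast
  then show ?thesis
  proof cases
    case 1
    then have "a \<in> B" using AP a by blast
    then show ?thesis using delta_nonneg by (intro bexI[of _ a]) auto
  next
    case 2
    then show ?thesis
      using exists_close_point_if_disjoint_same_points_below[OF A 2 B _ below a] AP by simp
  next
    case 3
    then have "a \<noteq> 1" using one_in_cut by auto
    then have "arc_coord 1 a \<noteq> arc_coord 1 1"
      using arc_coord_less_pi[OF one_in_S1 \<open>a \<in> S1\<close>] arc_coord_self[OF one_in_S1] by simp
    then obtain p where "p \<in> P" "dist (g a) (g p) \<le> \<delta>"
      using dist_le_nearest_cut_point[OF one_in_S1 \<open>a \<in> S1\<close> \<open>a \<noteq> 1\<close> one_in_cut] by blast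
    then show ?thesis using 3 AP by auto
  next
    case 4
    then show ?thesis
      using exists_close_cut_point_in_continuum[OF A 4(1,2,3) a 4(4)] AP by auto
  qed
qed

lemma hausdorff_dist_image_le_if_same_cut_signature:
  assumes "A \<in> continua_S1" "B \<in> continua_S1" "cut_signature P A = cut_signature P B"
  shows "hausdorff_dist (g ` A) (g ` B) \<le> \<delta>"
proof (rule hausdorff_dist_le)
  show "g ` A \<noteq> {}" "g ` B \<noteq> {}" using assms by (auto simp: continua_S1_def)
  show "\<exists>b\<in>g ` B. dist a' b \<le> \<delta>" if "a' \<in> g ` A" for a'
    using that exists_close_point_if_same_cut_signature[OF assms] by blast
  show "\<exists>a\<in>g ` A. dist b' a \<le> \<delta>" if "b' \<in> g ` B" for b'
    using that exists_close_point_if_same_cut_signature[OF assms(2,1) assms(3)[symmetric]] by blast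
qed

end

section \<open>Entropy of the induced map on continua\<close>

lemma limsup_separated_growth_eq_0:
  assumes "x \<in> X"
    and bound: "\<And>n E. finite E \<Longrightarrow> separated_set d T X n \<epsilon> E \<Longrightarrow> card E \<le> c * (n + 1) ^ N"
  shows "limsup (\<lambda>n. SUP E\<in>{E. finite E \<and> separated_set d T X n \<epsilon> E}.
      ereal (ln (real (card E)) / real n)) = 0"
    (is "limsup ?h = 0")
proof (rule antisym)
  define b where "b n = ln ((real c + 1) * (real n + 1) ^ N) / real n" for n :: nat
  have "?h n \<le> ereal (b n)" for n
  proof (rule SUP_least)
    fix E assume "E \<in> {E. finite E \<and> separated_set d T X n \<epsilon> E}"
    then have "real (card E) \<le> real (c * (n + 1) ^ N)"
      using bound[of E n] by (simp only: of_nat_le_iff) simp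
    also have "\<dots> \<le> (real c + 1) * (real n + 1) ^ N"
      by (simp add: distrib_right add.commute)
    finally have "real (card E) \<le> (real c + 1) * (real n + 1) ^ N" .
    moreover have "1 \<le> (real c + 1) * (real n + 1) ^ N"
      using mult_mono[of 1 "real c + 1" 1 "(real n + 1) ^ N"] by simp
    ultimately have "ln (real (card E)) \<le> ln ((real c + 1) * (real n + 1) ^ N)"
      by (cases "card E = 0") auto
    then show "ereal (ln (real (card E)) / real n) \<le> ereal (b n)"
      by (simp add: b_def divide_right_mono)
  qed
  then have "limsup ?h \<le> limsup (\<lambda>n. ereal (b n))"
    by (intro Limsup_mono) simp
  also have "\<dots> = 0"
  proof -
    have "b \<longlonglongrightarrow> 0" unfolding b_def by real_asymp
    then have "limsup (\<lambda>n. ereal (b n)) = ereal 0"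
      by (intro lim_imp_Limsup) (simp_all add: lim_ereal)
    then show ?thesis by (simp add: zero_ereal_def)
  qed
  finally show "limsup ?h \<le> 0" .
next
  have "0 \<le> ?h n" for n
  proof -
    have "{x} \<in> {E. finite E \<and> separated_set d T X n \<epsilon> E}"
      using assms(1) by (simp add: separated_set_def)
    then have "ereal (ln (real (card {x})) / real n) \<le> ?h n" by (rule SUP_upper)
    then show ?thesis by (simp add: zero_ereal_def)
  qed
  then show "0 \<le> limsup ?h" by (intro le_Limsup) auto
qed

lemma topological_entropy_eq_0_if_polynomial_growth:
  assumes "x \<in> X"
    and "\<And>\<epsilon>. \<epsilon> > 0 \<Longrightarrow>
      \<exists>c N. \<forall>n E. finite E \<and> separated_set d T X n \<epsilon> E \<longrightarrow> card E \<le> c * (n + 1) ^ N"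
  shows "topological_entropy d T X = 0"
proof -
  have "topological_entropy d T X = (SUP \<epsilon>\<in>{0::real<..}. 0)"
    unfolding topological_entropy_def
  proof (rule SUP_cong)
    fix \<epsilon> :: real assume "\<epsilon> \<in> {0<..}"
    then obtain c N
      where "\<forall>n E. finite E \<and> separated_set d T X n \<epsilon> E \<longrightarrow> card E \<le> c * (n + 1) ^ N"
      using assms(2) by fastforce
    then show "limsup (\<lambda>n. SUP E\<in>{E. finite E \<and> separated_set d T X n \<epsilon> E}.
        ereal (ln (real (card E)) / real n)) = 0"
      using limsup_separated_growth_eq_0[OF assms(1)] by blast
  qed simp
  then show ?thesis by simp
qed

lemma funpow_image:
  fixes h :: "'a \<Rightarrow> 'a"
  shows "((\<lambda>A. h ` A) ^^ k) X = (h ^^ k) ` X"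
  by (induction k) (simp_all add: image_comp)

locale circle_embedding =
  fixes f :: "complex \<Rightarrow> complex"
  assumes maps_S1: "f ` S1 \<subseteq> S1" and inj_on_S1: "inj_on f S1"
    and continuous_on_S1: "continuous_on S1 f"
begin

lemma funpow_in_S1: "x \<in> S1 \<Longrightarrow> (f ^^ k) x \<in> S1"
  by (induction k) (use maps_S1 in auto)

lemma inj_on_funpow: "inj_on (f ^^ k) S1"
  by (induction k) (auto simp: inj_on_def funpow_in_S1 dest: inj_onD[OF inj_on_S1])

lemma continuous_on_funpow: "continuous_on S1 (f ^^ k)"
proof (induction k)
  case (Suc k)
  then show ?case
    using continuous_on_compose2[OF continuous_on_S1 Suc] funpow_in_S1 by auto
qed simp

definition roots_preimages :: "nat \<Rightarrow> nat \<Rightarrow> complex set" where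
  "roots_preimages m n = (\<Union>k<n. (f ^^ k) -` roots_of_unity m \<inter> S1)"

lemma finite_roots_preimages: "finite (roots_preimages m n)"
  unfolding roots_preimages_def
  by (intro finite_UN_I finite_lessThan finite_vimage_IntI finite_roots_of_unity inj_on_funpow)

lemma card_roots_preimages_le: "card (roots_preimages m n) \<le> m * n"
proof -
  have "card (roots_preimages m n) \<le> (\<Sum>k<n. card ((f ^^ k) -` roots_of_unity m \<inter> S1))"
    unfolding roots_preimages_def by (rule card_UN_le) simp
  also have "\<dots> \<le> (\<Sum>k<n. m)"
    using card_vimage_inj_on_le[OF inj_on_funpow finite_roots_of_unity] card_roots_of_unity_le
    by (intro sum_mono) (blast intro: order_trans)
  finally show ?thesis by (simp add: mult.commute)
qed

lemma circle_cut_funpow: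
  assumes "m > 0" "k < n"
  shows "circle_cut (roots_preimages m n) (f ^^ k) (2 * pi / m)"
proof
  show "finite (roots_preimages m n)" by (rule finite_roots_preimages)
  show "roots_preimages m n \<subseteq> S1" by (auto simp: roots_preimages_def)
  show "1 \<in> roots_preimages m n"
    using assms one_in_roots_of_unity one_in_S1
    by (auto simp: roots_preimages_def intro!: bexI[of _ 0])
  show "continuous_on S1 (f ^^ k)" by (rule continuous_on_funpow)
  fix C x y assume C: "connected C" "C \<subseteq> S1 - roots_preimages m n" and "x \<in> C" "y \<in> C"
  have "connected ((f ^^ k) ` C)"
    using C by (intro connected_continuous_image continuous_on_subset[OF continuous_on_funpow]) auto
  moreover have "(f ^^ k) ` C \<subseteq> S1 - roots_of_unity m"
    using C assms(2) by (auto simp: roots_preimages_def funpow_in_S1)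
  ultimately show "dist ((f ^^ k) x) ((f ^^ k) y) \<le> 2 * pi / m"
    using \<open>x \<in> C\<close> \<open>y \<in> C\<close>
    by (intro dist_le_if_connected_avoiding_roots_of_unity[OF assms(1)]) auto
qed

lemma card_separated_set_le:
  assumes m: "m > 0" "2 * pi / m \<le> \<epsilon>"
    and E: "separated_set hausdorff_dist (\<lambda>A. f ` A) continua_S1 n \<epsilon> E"
  shows "card E \<le> (card (roots_preimages m n) ^ 3 + 2) * (card (roots_preimages m n) + 1)"
proof -
  let ?P = "roots_preimages m n"
  have E_sub: "E \<subseteq> continua_S1" using E by (simp add: separated_set_def)
  have "inj_on (cut_signature ?P) E"
  proof (rule inj_onI, rule ccontr)
    fix A B assume "A \<in> E" "B \<in> E" "A \<noteq> B" and sig: "cut_signature ?P A = cut_signature ?P B"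
    then obtain k where "k < n" and far: "hausdorff_dist ((f ^^ k) ` A) ((f ^^ k) ` B) > \<epsilon>"
      using E unfolding separated_set_def funpow_image by blast
    interpret circle_cut ?P "f ^^ k" "2 * pi / m" using circle_cut_funpow[OF m(1) \<open>k < n\<close>] .
    have "hausdorff_dist ((f ^^ k) ` A) ((f ^^ k) ` B) \<le> 2 * pi / m"
      using \<open>A \<in> E\<close> \<open>B \<in> E\<close> E_sub sig
      by (intro hausdorff_dist_image_le_if_same_cut_signature) auto
    then show False using far m(2) by simp
  qed
  then have "card E \<le> card (cut_signature ?P ` continua_S1)"
    using E_sub finite_cut_signatures[OF finite_roots_preimages]
    by (intro card_inj_on_le) (auto simp: roots_preimages_def)
  also have "\<dots> \<le> (card ?P ^ 3 + 2) * (card ?P + 1)"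
    by (rule card_cut_signatures_le[OF finite_roots_preimages]) (auto simp: roots_preimages_def)
  finally show ?thesis .
qed

lemma topological_entropy_hyperspace_eq_0:
  "topological_entropy hausdorff_dist (\<lambda>A. f ` A) continua_S1 = 0"
proof (rule topological_entropy_eq_0_if_polynomial_growth)
  show "S1 \<in> continua_S1"
    by (simp add: continua_S1_def S1_def compact_sphere connected_sphere)
  fix \<epsilon> :: real assume "\<epsilon> > 0"
  obtain m :: nat where "2 * pi / \<epsilon> < m" using reals_Archimedean2 by blast
  then have "2 * pi < \<epsilon> * m"
    using \<open>\<epsilon> > 0\<close> by (simp add: field_simps)
  then have m: "m > 0" "2 * pi / m \<le> \<epsilon>"
    using pi_gt_zero by (cases "m = 0"; simp add: pos_divide_le_eq)+
  have "card E \<le> (m + 2) ^ 4 * (n + 1) ^ 4"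
    if "separated_set hausdorff_dist (\<lambda>A. f ` A) continua_S1 n \<epsilon> E" for n E
  proof -
    let ?p = "card (roots_preimages m n)"
    have "card E \<le> (?p ^ 3 + 2) * (?p + 1)" by (rule card_separated_set_le[OF m that])
    also have "\<dots> \<le> (?p + 2) ^ 4" by (simp add: eval_nat_numeral algebra_simps)
    also have "?p + 2 \<le> (m + 2) * (n + 1)"
      using card_roots_preimages_le[of m n] by (simp add: algebra_simps)
    then have "(?p + 2) ^ 4 \<le> ((m + 2) * (n + 1)) ^ 4" by (rule power_mono) simp
    finally show ?thesis by (simp only: power_mult_distrib)
  qed
  then show "\<exists>c N. \<forall>n E. finite E \<and> separated_set hausdorff_dist (\<lambda>A. f ` A) continua_S1 n \<epsilon> E
      \<longrightarrow> card E \<le> c * (n + 1) ^ N"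
    by blast
qed

end

theorem theorem5p2:
  fixes f :: "complex \<Rightarrow> complex"
  assumes "morse_smale_circle f"
  shows "topological_entropy hausdorff_dist (\<lambda>A. f ` A) continua_S1 = 0"
proof -
  have "bij_betw f S1 S1" and "C1_circle_map f"
    using assms by (simp_all add: morse_smale_circle_def C1_circle_diffeo_def)
  then obtain f' where "\<And>t. ((\<lambda>s. f (cis s)) has_vector_derivative f' t) (at t)"
    by (auto simp: C1_circle_map_def)
  then have "continuous_on UNIV (\<lambda>s. f (cis s))"
    by (intro continuous_at_imp_continuous_on ballI has_vector_derivative_continuous)
  then have "circle_embedding f"
    using \<open>bij_betw f S1 S1\<close> continuous_on_S1_if_continuous_cis
    by unfold_locales (auto simp: bij_betw_def)
  then show ?thesis by (rule circle_embedding.topological_entropy_hyperspace_eq_0)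
qed

end
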